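(* Let $n\ge4$, let $V$ be an inner product space over $\mathbb{K}\in\{\mathbb{R},\mathbb{C}\}$, let $x_1,\dots,x_n\in V$, and set $x_{n+1}=x_1$. For $1\le i<j\le n$ let $$c_{ij}=\sum_{r=0}^{2}(-1)^{r+1}\binom{n-j+i-1}{2-r}\binom{j-i-1}{r}.$$ Then $$\binom{n-2}{2}\sum_{i=1}^n\|x_i-x_{i+1}\|^2=\sum_{\substack{1\le i<j\le n\\ 1<j-i<n-1}}c_{ij}\|x_i-x_j\|^2+\sum_{1\le i<j<k<l\le n}\|x_i-x_j+x_k-x_l\|^2.$$
   Context: $\|v\|=\sqrt{(v,v)}$ denotes the norm induced by the inner product of $V$. Binomial coefficients $\binom{a}{b}$ are $0$ when $b>a$ or $b<0$. *)

theory Defs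
  imports "HOL-Analysis.Analysis"
begin

definition coef_c :: "nat \<Rightarrow> nat \<Rightarrow> nat \<Rightarrow> int" where
  "coef_c n i j = (\<Sum>r\<le>(2::nat). (-1) ^ (r + 1) * int ((n - j + i - 1) choose (2 - r))
                                        * int ((j - i - 1) choose r))"

end

theory Submission
  imports Defs
begin

text \<open>
  Expanding each norm(x_i - x_j + x_k - x_l)^2 into squared distances (with sign + for the
  pairs ij, il, jk, kl and - for ik, jl) turns the quadruple sum into a sum over pairs p < q of
  w_pq norm(x_p - x_q)^2, where w_pq is a signed count of the quadruples containing p and q.
  If a indices lie outside [p, q] and g strictly inside, then w_pq = C(a,2) + C(g,2) - a g,
  which is exactly -c_pq. Hence the right-hand side collapses to the pairs that are neighbours
  on the n-cycle, and for these (g = 0 or a = 0) the weight is C(n-2,2).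
\<close>

definition index_pairs :: "nat \<Rightarrow> (nat \<times> nat) set" where
  "index_pairs n = {(i, j). 1 \<le> i \<and> i < j \<and> j \<le> n}"

definition index_quadruples :: "nat \<Rightarrow> (nat \<times> nat \<times> nat \<times> nat) set" where
  "index_quadruples n = {(i, j, k, l). 1 \<le> i \<and> i < j \<and> j < k \<and> k < l \<and> l \<le> n}"

lemma finite_index_pairs [simp]: "finite (index_pairs n)"
  by (rule finite_subset[of _ "{..n} \<times> {..n}"]) (auto simp: index_pairs_def)

lemma finite_index_quadruples [simp]: "finite (index_quadruples n)"
  by (rule finite_subset[of _ "{..n} \<times> {..n} \<times> {..n} \<times> {..n}"]) (auto simp: index_quadruples_def)

lemma Suc_choose_two: "Suc m choose 2 = (m choose 2) + m"
  using binomial_Suc_Suc[of m 1] by (simp add: numeral_2_eq_2)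

lemma add_choose_two: "(a + b) choose 2 = (a choose 2) + (b choose 2) + a * b"
  by (induction b) (simp_all add: Suc_choose_two)

lemma card_pairs_between: "card {(a, b). lo < a \<and> a < b \<and> b < (hi::nat)} = (hi - lo - 1) choose 2"
proof (induction hi)
  case 0
  then show ?case by simp
next
  case (Suc h)
  have pairs_Suc: "{(a, b). lo < a \<and> a < b \<and> b < Suc h}
      = {(a, b). lo < a \<and> a < b \<and> b < h} \<union> (\<lambda>a. (a, h)) ` {lo<..<h}"
    by auto
  have "finite {(a, b). lo < a \<and> a < b \<and> b < h}"
    by (rule finite_subset[of _ "{..<h} \<times> {..<h}"]) auto
  then have "card {(a, b). lo < a \<and> a < b \<and> b < Suc h} = ((h - lo - 1) choose 2) + (h - Suc lo)"
    unfolding pairs_Suc using Suc.IH by (subst card_Un_disjoint) (auto simp: card_image inj_on_def)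
  also have "\<dots> = (Suc h - lo - 1) choose 2"
    by (cases "lo < h") (simp_all add: Suc_choose_two[symmetric] Suc_diff_Suc)
  finally show ?case .
qed

lemma sum_comp_by_fibre_card:
  fixes f :: "'b \<Rightarrow> 'c::semiring_1"
  assumes "finite S" "finite T" "\<pi> ` S \<subseteq> T"
    and "\<And>t. t \<in> T \<Longrightarrow> card {s \<in> S. \<pi> s = t} = c t"
  shows "(\<Sum>s\<in>S. f (\<pi> s)) = (\<Sum>t\<in>T. of_nat (c t) * f t)"
proof -
  have "(\<Sum>s\<in>S. f (\<pi> s)) = (\<Sum>t\<in>T. \<Sum>s\<in>{s\<in>S. \<pi> s = t}. f (\<pi> s))"
    by (rule sum.group[OF assms(1-3), symmetric])
  also have "\<dots> = (\<Sum>t\<in>T. of_nat (c t) * f t)"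
    using assms(4) by (intro sum.cong) auto
  finally show ?thesis .
qed

lemma card_index_quadruple_fibres:
  assumes "(p, q) \<in> index_pairs n"
  shows "card {s \<in> index_quadruples n. (case s of (i, j, k, l) \<Rightarrow> (i, j)) = (p, q)} = (n - q) choose 2"
    and "card {s \<in> index_quadruples n. (case s of (i, j, k, l) \<Rightarrow> (k, l)) = (p, q)} = (p - 1) choose 2"
    and "card {s \<in> index_quadruples n. (case s of (i, j, k, l) \<Rightarrow> (i, l)) = (p, q)} = (q - p - 1) choose 2"
    and "card {s \<in> index_quadruples n. (case s of (i, j, k, l) \<Rightarrow> (j, k)) = (p, q)} = (p - 1) * (n - q)"
    and "card {s \<in> index_quadruples n. (case s of (i, j, k, l) \<Rightarrow> (i, k)) = (p, q)} = (q - p - 1) * (n - q)"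
    and "card {s \<in> index_quadruples n. (case s of (i, j, k, l) \<Rightarrow> (j, l)) = (p, q)} = (p - 1) * (q - p - 1)"
proof -
  have "{s \<in> index_quadruples n. (case s of (i, j, k, l) \<Rightarrow> (i, j)) = (p, q)}
      = (\<lambda>(k, l). (p, q, k, l)) ` {(k, l). q < k \<and> k < l \<and> l < Suc n}"
    using assms by (auto simp: index_quadruples_def index_pairs_def image_iff)
  then show "card {s \<in> index_quadruples n. (case s of (i, j, k, l) \<Rightarrow> (i, j)) = (p, q)} = (n - q) choose 2"
    by (simp add: card_image inj_on_def card_pairs_between)
  have "{s \<in> index_quadruples n. (case s of (i, j, k, l) \<Rightarrow> (k, l)) = (p, q)}
      = (\<lambda>(i, j). (i, j, p, q)) ` {(i, j). 0 < i \<and> i < j \<and> j < p}"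
    using assms by (auto simp: index_quadruples_def index_pairs_def image_iff)
  then show "card {s \<in> index_quadruples n. (case s of (i, j, k, l) \<Rightarrow> (k, l)) = (p, q)} = (p - 1) choose 2"
    by (simp add: card_image inj_on_def card_pairs_between)
  have "{s \<in> index_quadruples n. (case s of (i, j, k, l) \<Rightarrow> (i, l)) = (p, q)}
      = (\<lambda>(j, k). (p, j, k, q)) ` {(j, k). p < j \<and> j < k \<and> k < q}"
    using assms by (auto simp: index_quadruples_def index_pairs_def image_iff)
  then show "card {s \<in> index_quadruples n. (case s of (i, j, k, l) \<Rightarrow> (i, l)) = (p, q)} = (q - p - 1) choose 2"
    by (simp add: card_image inj_on_def card_pairs_between)
  have "{s \<in> index_quadruples n. (case s of (i, j, k, l) \<Rightarrow> (j, k)) = (p, q)}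
      = (\<lambda>(i, l). (i, p, q, l)) ` ({1..<p} \<times> {q<..n})"
    using assms by (auto simp: index_quadruples_def index_pairs_def image_iff)
  then show "card {s \<in> index_quadruples n. (case s of (i, j, k, l) \<Rightarrow> (j, k)) = (p, q)} = (p - 1) * (n - q)"
    by (simp add: card_image inj_on_def card_cartesian_product)
  have "{s \<in> index_quadruples n. (case s of (i, j, k, l) \<Rightarrow> (i, k)) = (p, q)}
      = (\<lambda>(j, l). (p, j, q, l)) ` ({p<..<q} \<times> {q<..n})"
    using assms by (auto simp: index_quadruples_def index_pairs_def image_iff)
  then show "card {s \<in> index_quadruples n. (case s of (i, j, k, l) \<Rightarrow> (i, k)) = (p, q)} = (q - p - 1) * (n - q)"
    by (simp add: card_image inj_on_def card_cartesian_product)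
  have "{s \<in> index_quadruples n. (case s of (i, j, k, l) \<Rightarrow> (j, l)) = (p, q)}
      = (\<lambda>(i, k). (i, p, k, q)) ` ({1..<p} \<times> {p<..<q})"
    using assms by (auto simp: index_quadruples_def index_pairs_def image_iff)
  then show "card {s \<in> index_quadruples n. (case s of (i, j, k, l) \<Rightarrow> (j, l)) = (p, q)} = (p - 1) * (q - p - 1)"
    by (simp add: card_image inj_on_def card_cartesian_product)
qed

definition quadruple_weight :: "nat \<Rightarrow> nat \<Rightarrow> nat \<Rightarrow> int" where
  "quadruple_weight n p q = int ((n - q + p - 1) choose 2) + int ((q - p - 1) choose 2)
     - int (n - q + p - 1) * int (q - p - 1)"

lemma quadruple_weight_eq_fibre_cards:
  assumes "(p, q) \<in> index_pairs n"
  shows "quadruple_weight n p q = int ((n - q) choose 2) + int ((p - 1) choose 2) + int ((q - p - 1) choose 2)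
     + int ((p - 1) * (n - q)) - int ((q - p - 1) * (n - q)) - int ((p - 1) * (q - p - 1))"
proof -
  obtain a g b where "p = a + 1" "q = a + g + 2" "n = a + g + b + 2"
    using assms unfolding index_pairs_def by (intro that[of "p - 1" "q - p - 1" "n - q"]) auto
  then show ?thesis
    unfolding quadruple_weight_def by (simp add: add_choose_two algebra_simps)
qed

lemma sum_index_quadruples_signed_pairs:
  fixes f :: "nat \<Rightarrow> nat \<Rightarrow> 'a::comm_ring_1"
  shows "(\<Sum>(i, j, k, l)\<in>index_quadruples n. f i j + f i l + f j k + f k l - f i k - f j l)
       = (\<Sum>(p, q)\<in>index_pairs n. of_int (quadruple_weight n p q) * f p q)"
proof -
  let ?Q = "index_quadruples n" and ?P = "index_pairs n"
  have fibre_sum: "(\<Sum>s\<in>?Q. case_prod f (\<pi> s)) = (\<Sum>(p, q)\<in>?P. of_nat (c p q) * f p q)"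
    if "\<pi> ` ?Q \<subseteq> ?P" "\<And>p q. (p, q) \<in> ?P \<Longrightarrow> card {s \<in> ?Q. \<pi> s = (p, q)} = c p q"
    for \<pi> :: "nat \<times> nat \<times> nat \<times> nat \<Rightarrow> nat \<times> nat" and c
    using sum_comp_by_fibre_card[of ?Q ?P \<pi> "case_prod c" "case_prod f"] that
    by (force simp: case_prod_unfold)
  have images:
    "(\<lambda>(i, j, k, l). (i, j)) ` ?Q \<subseteq> ?P" "(\<lambda>(i, j, k, l). (k, l)) ` ?Q \<subseteq> ?P"
    "(\<lambda>(i, j, k, l). (i, l)) ` ?Q \<subseteq> ?P" "(\<lambda>(i, j, k, l). (j, k)) ` ?Q \<subseteq> ?P"
    "(\<lambda>(i, j, k, l). (i, k)) ` ?Q \<subseteq> ?P" "(\<lambda>(i, j, k, l). (j, l)) ` ?Q \<subseteq> ?P"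
    by (auto simp: index_quadruples_def index_pairs_def)
  have pair_sums:
    "(\<Sum>(i, j, k, l)\<in>?Q. f i j) = (\<Sum>(p, q)\<in>?P. of_nat ((n - q) choose 2) * f p q)"
    "(\<Sum>(i, j, k, l)\<in>?Q. f k l) = (\<Sum>(p, q)\<in>?P. of_nat ((p - 1) choose 2) * f p q)"
    "(\<Sum>(i, j, k, l)\<in>?Q. f i l) = (\<Sum>(p, q)\<in>?P. of_nat ((q - p - 1) choose 2) * f p q)"
    "(\<Sum>(i, j, k, l)\<in>?Q. f j k) = (\<Sum>(p, q)\<in>?P. of_nat ((p - 1) * (n - q)) * f p q)"
    "(\<Sum>(i, j, k, l)\<in>?Q. f i k) = (\<Sum>(p, q)\<in>?P. of_nat ((q - p - 1) * (n - q)) * f p q)"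
    "(\<Sum>(i, j, k, l)\<in>?Q. f j l) = (\<Sum>(p, q)\<in>?P. of_nat ((p - 1) * (q - p - 1)) * f p q)"
    using fibre_sum[OF images(1) card_index_quadruple_fibres(1)]
      fibre_sum[OF images(2) card_index_quadruple_fibres(2)]
      fibre_sum[OF images(3) card_index_quadruple_fibres(3)]
      fibre_sum[OF images(4) card_index_quadruple_fibres(4)]
      fibre_sum[OF images(5) card_index_quadruple_fibres(5)]
      fibre_sum[OF images(6) card_index_quadruple_fibres(6)]
    by (simp_all add: case_prod_unfold)
  have "(\<Sum>(i, j, k, l)\<in>?Q. f i j + f i l + f j k + f k l - f i k - f j l)
      = (\<Sum>(i, j, k, l)\<in>?Q. f i j) + (\<Sum>(i, j, k, l)\<in>?Q. f k l)
      + (\<Sum>(i, j, k, l)\<in>?Q. f i l) + (\<Sum>(i, j, k, l)\<in>?Q. f j k)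
      - (\<Sum>(i, j, k, l)\<in>?Q. f i k) - (\<Sum>(i, j, k, l)\<in>?Q. f j l)"
    by (simp add: sum.distrib sum_subtractf case_prod_unfold algebra_simps)
  also have "\<dots> = (\<Sum>(p, q)\<in>?P. of_int (quadruple_weight n p q) * f p q)"
    unfolding pair_sums sum.distrib[symmetric] sum_subtractf[symmetric]
    by (intro sum.cong) (auto simp: quadruple_weight_eq_fibre_cards algebra_simps)
  finally show ?thesis .
qed

lemma coef_c_eq_neg_quadruple_weight: "coef_c n i j = - quadruple_weight n i j"
  unfolding coef_c_def quadruple_weight_def by (simp add: numeral_2_eq_2)

definition cyclic_neighbours :: "nat \<Rightarrow> nat \<Rightarrow> nat \<Rightarrow> bool" where
  "cyclic_neighbours n p q \<longleftrightarrow> q - p = 1 \<or> q - p = n - 1"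

lemma quadruple_weight_cyclic_neighbours:
  assumes "(p, q) \<in> index_pairs n" "cyclic_neighbours n p q"
  shows "quadruple_weight n p q = int ((n - 2) choose 2)"
proof -
  from assms consider "q = p + 1" "q \<le> n" | "p = 1" "q = n"
    by (auto simp: index_pairs_def cyclic_neighbours_def)
  then show ?thesis
    by cases (simp_all add: quadruple_weight_def numeral_2_eq_2)
qed

lemma sum_cycle_edges_eq_sum_cyclic_neighbours:
  fixes f :: "nat \<Rightarrow> nat \<Rightarrow> 'a::semiring_1"
  assumes "3 \<le> n" and f_sym: "\<And>i j. f i j = f j i"
  shows "(\<Sum>i = 1..n. f i (if i = n then 1 else i + 1))
       = (\<Sum>(p, q)\<in>index_pairs n. of_bool (cyclic_neighbours n p q) * f p q)"
proof -
  let ?edge = "\<lambda>i. if i = n then (1, n) else (i, i + 1)"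
  let ?neighbours = "index_pairs n \<inter> {t. case_prod (cyclic_neighbours n) t}"
  have "(\<Sum>i = 1..n. f i (if i = n then 1 else i + 1)) = (\<Sum>i = 1..n. case_prod f (?edge i))"
    using f_sym by (intro sum.cong) auto
  also have "\<dots> = (\<Sum>t\<in>?edge ` {1..n}. case_prod f t)"
    using \<open>3 \<le> n\<close> by (subst sum.reindex) (auto simp: inj_on_def)
  also have "?edge ` {1..n} = ?neighbours"
    using \<open>3 \<le> n\<close> by (force simp: index_pairs_def cyclic_neighbours_def image_iff)
  finally show ?thesis
    by (simp add: case_prod_unfold)
qed

lemma sum_non_neighbours_eq_sum_of_bool:
  fixes g :: "nat \<Rightarrow> nat \<Rightarrow> 'a::semiring_1"
  shows "(\<Sum>(i, j) \<in> {(i, j). 1 \<le> i \<and> i < j \<and> j \<le> n \<and> 1 < j - i \<and> j - i < n - 1}. g i j)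
       = (\<Sum>(p, q)\<in>index_pairs n. of_bool (\<not> cyclic_neighbours n p q) * g p q)"
proof -
  have "{(i, j). 1 \<le> i \<and> i < j \<and> j \<le> n \<and> 1 < j - i \<and> j - i < n - 1}
      = index_pairs n \<inter> {t. \<not> case_prod (cyclic_neighbours n) t}"
    by (auto simp: index_pairs_def cyclic_neighbours_def)
  then show ?thesis
    by (simp add: case_prod_unfold)
qed

lemma power2_norm_diff_add_diff:
  fixes a b c d :: "'a::real_inner"
  shows "(norm (a - b + c - d))\<^sup>2 = (norm (a - b))\<^sup>2 + (norm (a - d))\<^sup>2 + (norm (b - c))\<^sup>2
    + (norm (c - d))\<^sup>2 - (norm (a - c))\<^sup>2 - (norm (b - d))\<^sup>2"
  by (simp add: power2_norm_eq_inner inner_diff_left inner_diff_right inner_add_left inner_add_right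
      inner_commute algebra_simps)

theorem theorem3p2:
  fixes n :: nat and x :: "nat \<Rightarrow> 'a::real_inner"
  assumes "n \<ge> 4"
  shows "real ((n - 2) choose 2) * (\<Sum>i = 1..n. (norm (x i - x (if i = n then 1 else i + 1)))\<^sup>2)
    = (\<Sum>(i, j) \<in> {(i, j). 1 \<le> i \<and> i < j \<and> j \<le> n \<and> 1 < j - i \<and> j - i < n - 1}.
          of_int (coef_c n i j) * (norm (x i - x j))\<^sup>2)
      + (\<Sum>(i, j, k, l) \<in> {(i, j, k, l). 1 \<le> i \<and> i < j \<and> j < k \<and> k < l \<and> l \<le> n}.
          (norm (x i - x j + x k - x l))\<^sup>2)"
proof -
  let ?d = "\<lambda>i j. (norm (x i - x j))\<^sup>2"
  have coefficients: "(real ((n - 2) choose 2) * of_bool (cyclic_neighbours n p q)) * ?d p q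
      = of_bool (\<not> cyclic_neighbours n p q) * (of_int (coef_c n p q) * ?d p q)
        + of_int (quadruple_weight n p q) * ?d p q"
    if "(p, q) \<in> index_pairs n" for p q
    using quadruple_weight_cyclic_neighbours[OF that]
    by (cases "cyclic_neighbours n p q") (simp_all add: coef_c_eq_neg_quadruple_weight)
  have "(\<Sum>i = 1..n. ?d i (if i = n then 1 else i + 1))
      = (\<Sum>(p, q)\<in>index_pairs n. of_bool (cyclic_neighbours n p q) * ?d p q)"
    using assms by (intro sum_cycle_edges_eq_sum_cyclic_neighbours) (simp_all add: norm_minus_commute)
  then have "real ((n - 2) choose 2) * (\<Sum>i = 1..n. ?d i (if i = n then 1 else i + 1))
      = (\<Sum>(p, q)\<in>index_pairs n. (real ((n - 2) choose 2) * of_bool (cyclic_neighbours n p q)) * ?d p q)"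
    by (simp only: sum_distrib_left) (auto intro!: sum.cong)
  also have "\<dots> = (\<Sum>(p, q)\<in>index_pairs n. of_bool (\<not> cyclic_neighbours n p q) * (of_int (coef_c n p q) * ?d p q))
      + (\<Sum>(p, q)\<in>index_pairs n. of_int (quadruple_weight n p q) * ?d p q)"
    unfolding sum.distrib[symmetric] by (intro sum.cong) (auto simp: coefficients)
  also have "\<dots> = (\<Sum>(i, j) \<in> {(i, j). 1 \<le> i \<and> i < j \<and> j \<le> n \<and> 1 < j - i \<and> j - i < n - 1}.
          of_int (coef_c n i j) * ?d i j)
      + (\<Sum>(i, j, k, l) \<in> index_quadruples n. ?d i j + ?d i l + ?d j k + ?d k l - ?d i k - ?d j l)"
    by (simp only: sum_non_neighbours_eq_sum_of_bool sum_index_quadruples_signed_pairs)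
  finally show ?thesis
    by (simp add: index_quadruples_def power2_norm_diff_add_diff)
qed

end
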